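(* There exist constants $c_1,c_2>0$ and an infinite family of graphs $G$ (with $n$ vertices and $m$ edges, $n\to\infty$) such that each $G$ in the family admits a composition-minimal clique cover $\mathcal{C}$ with $c_1 m\le|\mathcal{C}|\le c_2 m$ and $c_1 nm\le\|\mathcal{C}\|\le c_2 nm$, i.e. $|\mathcal{C}|=\Theta(m)$ but $\|\mathcal{C}\|=\Theta(nm)$.
   Context: All graphs are finite, simple, undirected, with no isolated vertices; $n=|V|$, $m=|E|$. A non-edge is an unordered pair of distinct non-adjacent vertices. A clique is a vertex set inducing a complete subgraph. $\|\mathcal{F}\|:=\sum_{F\in\mathcal{F}}|F|$ for a family of finite sets. A clique cover of $G$ is an indexed family $\{C_\ell\}_{\ell\in I}$ of cliques of $G$ such that every edge lies in at least one member; it is composition-minimal if for every two distinct indices $i\ne j$ there exist $u\in C_i$, $v\in C_j$ with $\{u,v\}$ a non-edge. *)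

theory Defs
  imports Complex_Main
begin

definition simple_graph :: "'a set \<Rightarrow> ('a \<Rightarrow> 'a \<Rightarrow> bool) \<Rightarrow> bool" where
  "simple_graph V E \<longleftrightarrow> finite V
     \<and> (\<forall>u v. E u v \<longrightarrow> u \<in> V \<and> v \<in> V)
     \<and> (\<forall>u v. E u v \<longrightarrow> E v u)
     \<and> (\<forall>u. \<not> E u u)
     \<and> (\<forall>v\<in>V. \<exists>u. E v u)"

definition edges :: "('a \<Rightarrow> 'a \<Rightarrow> bool) \<Rightarrow> 'a set set" where
  "edges E = {{u, v} | u v. E u v}"

definition num_edges :: "('a \<Rightarrow> 'a \<Rightarrow> bool) \<Rightarrow> nat" where
  "num_edges E = card (edges E)"

definition non_edge :: "'a set \<Rightarrow> ('a \<Rightarrow> 'a \<Rightarrow> bool) \<Rightarrow> 'a \<Rightarrow> 'a \<Rightarrow> bool" where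
  "non_edge V E u v \<longleftrightarrow> u \<in> V \<and> v \<in> V \<and> u \<noteq> v \<and> \<not> E u v"

definition is_clique :: "'a set \<Rightarrow> ('a \<Rightarrow> 'a \<Rightarrow> bool) \<Rightarrow> 'a set \<Rightarrow> bool" where
  "is_clique V E K \<longleftrightarrow> K \<subseteq> V \<and> (\<forall>u\<in>K. \<forall>v\<in>K. u \<noteq> v \<longrightarrow> E u v)"

definition clique_cover :: "'a set \<Rightarrow> ('a \<Rightarrow> 'a \<Rightarrow> bool) \<Rightarrow> 'i set \<Rightarrow> ('i \<Rightarrow> 'a set) \<Rightarrow> bool" where
  "clique_cover V E I C \<longleftrightarrow> (\<forall>l\<in>I. is_clique V E (C l))
     \<and> (\<forall>u v. E u v \<longrightarrow> (\<exists>l\<in>I. u \<in> C l \<and> v \<in> C l))"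

definition composition_minimal :: "'a set \<Rightarrow> ('a \<Rightarrow> 'a \<Rightarrow> bool) \<Rightarrow> 'i set \<Rightarrow> ('i \<Rightarrow> 'a set) \<Rightarrow> bool" where
  "composition_minimal V E I C \<longleftrightarrow> clique_cover V E I C
     \<and> (\<forall>i\<in>I. \<forall>j\<in>I. i \<noteq> j \<longrightarrow> (\<exists>u\<in>C i. \<exists>v\<in>C j. non_edge V E u v))"

definition total_size :: "'i set \<Rightarrow> ('i \<Rightarrow> 'a set) \<Rightarrow> nat" where
  "total_size I C = (\<Sum>l\<in>I. card (C l))"

end

theory Submission
  imports Defs
begin

(* Take 3k vertices in blocks A = [0,k), B = [k,2k), D = [2k,3k) and join every pair except
   those inside B or inside D: A is a clique adjacent to everything and B, D span a complete
   bipartite graph, so k^2 <= m <= 9k^2. The k^2 cliques A + {b, d} cover every edge, and two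
   of them differ in b or in d, which yields a non-edge inside B or inside D; so the cover is
   composition-minimal. It has k^2 = Theta(m) members of size k + 2, hence total size
   Theta(k^3) = Theta(n m). *)

lemma edges_subset_pairs:
  assumes "simple_graph V E"
  shows "edges E \<subseteq> (\<lambda>(u, v). {u, v}) ` (V \<times> V)"
  using assms unfolding simple_graph_def edges_def by auto

lemma finite_edges:
  assumes "simple_graph V E"
  shows "finite (edges E)"
  using assms edges_subset_pairs[OF assms]
  by (meson finite_SigmaI finite_imageI finite_subset simple_graph_def)

lemma num_edges_le_square:
  assumes "simple_graph V E"
  shows "num_edges E \<le> card V * card V"
proof -
  have "finite V" using assms by (simp add: simple_graph_def)
  then have "num_edges E \<le> card ((\<lambda>(u, v). {u, v}) ` (V \<times> V))"
    unfolding num_edges_def by (intro card_mono edges_subset_pairs[OF assms]) simp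
  also have "\<dots> \<le> card (V \<times> V)"
    using \<open>finite V\<close> by (intro card_image_le) simp
  finally show ?thesis by (simp add: card_cartesian_product)
qed

lemma card_mult_le_num_edges:
  assumes "finite (edges E)" and "X \<inter> Y = {}" and "\<And>x y. x \<in> X \<Longrightarrow> y \<in> Y \<Longrightarrow> E x y"
  shows "card X * card Y \<le> num_edges E"
proof -
  let ?pair = "\<lambda>(x, y). {x, y}"
  have "inj_on ?pair (X \<times> Y)"
    using assms(2) by (auto intro!: inj_onI simp: doubleton_eq_iff)
  then have "card X * card Y = card (?pair ` (X \<times> Y))"
    by (simp add: card_image card_cartesian_product)
  also have "\<dots> \<le> num_edges E"
    unfolding num_edges_def using assms(1,3) by (intro card_mono) (auto simp: edges_def)
  finally show ?thesis .
qed

lemma total_size_const_card: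
  assumes "\<And>l. l \<in> I \<Longrightarrow> card (C l) = c"
  shows "total_size I C = card I * c"
  unfolding total_size_def using assms by simp

lemma div_mod_less_of_less_square:
  fixes k l :: nat
  assumes "l < k*k"
  shows "l div k < k" and "l mod k < k"
proof -
  have "k > 0" using assms by (cases k) auto
  with assms show "l div k < k" "l mod k < k" by (simp_all add: less_mult_imp_div_less)
qed

definition hub_graph :: "nat \<Rightarrow> nat \<Rightarrow> nat \<Rightarrow> bool" where
  "hub_graph k u v \<longleftrightarrow> u < 3*k \<and> v < 3*k \<and> u \<noteq> v \<and> (u < k \<or> v < k \<or> (u < 2*k \<longleftrightarrow> 2*k \<le> v))"

definition hub_clique :: "nat \<Rightarrow> nat \<Rightarrow> nat set" where
  "hub_clique k l = {0..<k} \<union> {k + l div k, 2*k + l mod k}"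

lemma hub_clique_index:
  assumes "a < k" "b < k"
  shows "a*k + b < k*k" and "hub_clique k (a*k + b) = {0..<k} \<union> {k + a, 2*k + b}"
proof -
  have "a*k + b < (a + 1)*k" using assms(2) by simp
  also have "\<dots> \<le> k*k" using assms(1) by (intro mult_le_mono1) simp
  finally show "a*k + b < k*k" .
  show "hub_clique k (a*k + b) = {0..<k} \<union> {k + a, 2*k + b}"
    using assms(2) by (simp add: hub_clique_def)
qed

lemma simple_graph_hub_graph: "simple_graph {0..<3*k} (hub_graph k)"
  unfolding simple_graph_def
proof (intro conjI allI impI ballI)
  fix v assume "v \<in> {0..<3*k}"
  then have "hub_graph k v (if v < k then 2*k else 0)"
    by (auto simp: hub_graph_def)
  then show "\<exists>u. hub_graph k v u" ..
qed (auto simp: hub_graph_def)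

lemma composition_minimal_hub_cover:
  "composition_minimal {0..<3*k} (hub_graph k) {0..<k*k} (hub_clique k)"
  unfolding composition_minimal_def clique_cover_def
proof (intro conjI ballI allI impI)
  fix l assume "l \<in> {0..<k*k}"
  with div_mod_less_of_less_square show "is_clique {0..<3*k} (hub_graph k) (hub_clique k l)"
    unfolding is_clique_def hub_clique_def hub_graph_def by fastforce
next
  fix u v assume uv: "hub_graph k u v"
  define a where "a = (if k \<le> u \<and> u < 2*k then u - k else if k \<le> v \<and> v < 2*k then v - k else 0)"
  define b where "b = (if 2*k \<le> u then u - 2*k else if 2*k \<le> v then v - 2*k else 0)"
  have "a < k" "b < k" using uv unfolding a_def b_def hub_graph_def by auto
  moreover have "u \<in> {0..<k} \<union> {k + a, 2*k + b}" "v \<in> {0..<k} \<union> {k + a, 2*k + b}"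
    using uv unfolding a_def b_def hub_graph_def by auto
  ultimately show "\<exists>l\<in>{0..<k*k}. u \<in> hub_clique k l \<and> v \<in> hub_clique k l"
    using hub_clique_index by (intro bexI[of _ "a*k + b"]) auto
next
  fix i j assume ij: "i \<in> {0..<k*k}" "j \<in> {0..<k*k}" "i \<noteq> j"
  then have bounds: "i div k < k" "j div k < k" "i mod k < k" "j mod k < k"
    using div_mod_less_of_less_square by auto
  show "\<exists>u\<in>hub_clique k i. \<exists>v\<in>hub_clique k j. non_edge {0..<3*k} (hub_graph k) u v"
  proof (cases "i div k = j div k")
    case True
    then have "i mod k \<noteq> j mod k" using ij(3) by (metis div_mult_mod_eq)
    then have "non_edge {0..<3*k} (hub_graph k) (2*k + i mod k) (2*k + j mod k)"
      using bounds by (auto simp: non_edge_def hub_graph_def)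
    then show ?thesis by (auto simp: hub_clique_def)
  next
    case False
    then have "non_edge {0..<3*k} (hub_graph k) (k + i div k) (k + j div k)"
      using bounds by (auto simp: non_edge_def hub_graph_def)
    then show ?thesis by (auto simp: hub_clique_def)
  qed
qed

lemma total_size_hub_cover: "total_size {0..<k*k} (hub_clique k) = k*k*(k + 2)"
proof -
  have "card (hub_clique k l) = k + 2" if "l < k*k" for l
  proof -
    have "l div k < k" using div_mod_less_of_less_square[OF that] by simp
    then have "hub_clique k l = insert (k + l div k) (insert (2*k + l mod k) {0..<k})"
      and "k + l div k \<notin> insert (2*k + l mod k) {0..<k}"
      by (auto simp: hub_clique_def)
    then show ?thesis by simp
  qed
  then show ?thesis by (subst total_size_const_card) auto
qed

lemma num_edges_hub_graph: "k*k \<le> num_edges (hub_graph k)" "num_edges (hub_graph k) \<le> 9*k*k"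
proof -
  have "card {k..<2*k} * card {2*k..<3*k} \<le> num_edges (hub_graph k)"
    by (intro card_mult_le_num_edges finite_edges[OF simple_graph_hub_graph])
       (auto simp: hub_graph_def)
  then show "k*k \<le> num_edges (hub_graph k)" by simp
  show "num_edges (hub_graph k) \<le> 9*k*k"
    using num_edges_le_square[OF simple_graph_hub_graph, of k] by simp
qed

lemma hub_cover_size_bounds:
  assumes "k \<ge> 1"
  defines "m \<equiv> num_edges (hub_graph k)" and "t \<equiv> total_size {0..<k*k} (hub_clique k)"
  shows "m \<le> 27 * card {0..<k*k}" and "card {0..<k*k} \<le> m"
    and "card {0..<3*k} * m \<le> 27 * t" and "t \<le> card {0..<3*k} * m"
proof -
  have m: "k*k \<le> m" "m \<le> 9*k*k" unfolding m_def by (fact num_edges_hub_graph)+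
  then show "m \<le> 27 * card {0..<k*k}" "card {0..<k*k} \<le> m" by simp_all
  have "3*k * m \<le> 3*k * (9*k*k)" using m(2) by (rule mult_le_mono2)
  also have "\<dots> \<le> 27 * (k*k*(k + 2))" by simp
  finally show "card {0..<3*k} * m \<le> 27 * t" by (simp add: t_def total_size_hub_cover)
  have "k*k*(k + 2) \<le> k*k*(3*k)" using assms by (intro mult_le_mono2) simp
  also have "\<dots> \<le> 3*k * m" using m(1) by (simp add: mult.commute mult_le_mono2)
  finally show "t \<le> card {0..<3*k} * m" by (simp add: t_def total_size_hub_cover)
qed

theorem mainTheorem9:
  shows "\<exists>c1 c2 :: real. c1 > 0 \<and> c2 > 0 \<and>
    (\<forall>N :: nat. \<exists>(V :: nat set) (E :: nat \<Rightarrow> nat \<Rightarrow> bool) (I :: nat set) (C :: nat \<Rightarrow> nat set).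
       simple_graph V E \<and> card V \<ge> N \<and> composition_minimal V E I C \<and>
       c1 * real (num_edges E) \<le> real (card I) \<and> real (card I) \<le> c2 * real (num_edges E) \<and>
       c1 * real (card V) * real (num_edges E) \<le> real (total_size I C) \<and>
       real (total_size I C) \<le> c2 * real (card V) * real (num_edges E))"
proof (rule exI[of _ "1/27"], rule exI[of _ 1], intro conjI allI)
  fix N :: nat
  define k where "k = N + 1"
  then have "k \<ge> 1" and card_V: "card {0..<3*k} \<ge> N" by simp_all
  have "1/27 * real (num_edges (hub_graph k)) \<le> real (card {0..<k*k})"
    "real (card {0..<k*k}) \<le> 1 * real (num_edges (hub_graph k))"
    "1/27 * real (card {0..<3*k}) * real (num_edges (hub_graph k))
       \<le> real (total_size {0..<k*k} (hub_clique k))"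
    "real (total_size {0..<k*k} (hub_clique k))
       \<le> 1 * real (card {0..<3*k}) * real (num_edges (hub_graph k))"
    using hub_cover_size_bounds[OF \<open>k \<ge> 1\<close>, THEN of_nat_mono[where 'a=real]] by simp_all
  with card_V simple_graph_hub_graph composition_minimal_hub_cover
  show "\<exists>(V :: nat set) (E :: nat \<Rightarrow> nat \<Rightarrow> bool) (I :: nat set) (C :: nat \<Rightarrow> nat set).
       simple_graph V E \<and> card V \<ge> N \<and> composition_minimal V E I C \<and>
       1/27 * real (num_edges E) \<le> real (card I) \<and> real (card I) \<le> 1 * real (num_edges E) \<and>
       1/27 * real (card V) * real (num_edges E) \<le> real (total_size I C) \<and>
       real (total_size I C) \<le> 1 * real (card V) * real (num_edges E)"
    by blast
qed auto

end
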